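(* Let $d\ge1$, let $G$ be a graph and $F$ a set of nonedges of $G$. Let $\{B_x\}_{x\in V(M)}$ be an induced minor model of a graph $M$ in $G$ such that for every $uv\in F$, $u\in B_x$ and $v\in B_y$ for some $x\neq y$ and no edge of $G$ joins $B_x$ and $B_y$; let $F'$ be the set of the corresponding pairs $xy$ (nonedges of $M$). If $(G,F)$ is $d$-convex (resp. $d$-Cayley-connected), then $(M,F')$ is $d$-convex (resp. $d$-Cayley-connected).
   Context: A linkage $(G,\ell)$: finite simple graph $G$ and $\ell:E(G)\to\mathbb{R}_{\ge0}$ (squared lengths). A $d$-realization is $p:V(G)\to\mathbb{R}^d$ with $\|p(a)-p(b)\|^2=\ell(ab)$ for all $ab\in E(G)$; $\mathcal{C}^d(G,\ell)$ is the set of these. For an indexed set $F=\{u_1v_1,\dots,u_mv_m\}$ of nonedges (pairs of distinct non-adjacent vertices), $\phi_F(p)=(\|p(u_i)-p(v_i)\|^2)_i$ and $\Omega^d_F(G,\ell)=\phi_F(\mathcal{C}^d(G,\ell))$. $(G,F)$ is $d$-convex (resp. $d$-Cayley-connected) if $\Omega^d_F(G,\ell)$ is convex (resp. path-connected) for every $\ell$; the empty set counts as convex and connected. An induced minor model of $M$ in $G$ is a partition $\{B_x\}_{x\in V(M)}$ of $V(G)$ into nonempty sets each inducing a connected subgraph, such that $xy\in E(M)$ if and only if some edge of $G$ joins $B_x$ and $B_y$ (i.e. $M$ arises from $G$ by contractions only). *)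

theory Defs
  imports "HOL-Analysis.Analysis"
begin

text \<open>A finite simple graph: vertex set = UNIV of a finite type, edges given by a
symmetric irreflexive relation.\<close>
definition simple_graph :: "('a::finite \<Rightarrow> 'a \<Rightarrow> bool) \<Rightarrow> bool" where
  "simple_graph E \<longleftrightarrow> (\<forall>a b. E a b \<longrightarrow> E b a) \<and> (\<forall>a. \<not> E a a)"

definition nonedge :: "('a \<Rightarrow> 'a \<Rightarrow> bool) \<Rightarrow> 'a \<Rightarrow> 'a \<Rightarrow> bool" where
  "nonedge E u v \<longleftrightarrow> u \<noteq> v \<and> \<not> E u v"

definition indexed_nonedges ::
  "('a \<Rightarrow> 'a \<Rightarrow> bool) \<Rightarrow> 'i set \<Rightarrow> ('i \<Rightarrow> 'a \<times> 'a) \<Rightarrow> bool" where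
  "indexed_nonedges E I F \<longleftrightarrow>
     (\<forall>i\<in>I. nonedge E (fst (F i)) (snd (F i))) \<and>
     (\<forall>i\<in>I. \<forall>j\<in>I. i \<noteq> j \<longrightarrow> {fst (F i), snd (F i)} \<noteq> {fst (F j), snd (F j)})"

text \<open>Squared edge lengths \<open>\<ell>\<close>: nonnegative, and (being a function on unordered edges)
symmetric on edges; values on nonedges are irrelevant.\<close>
definition linkage_lengths :: "('a \<Rightarrow> 'a \<Rightarrow> bool) \<Rightarrow> ('a \<Rightarrow> 'a \<Rightarrow> real) \<Rightarrow> bool" where
  "linkage_lengths E l \<longleftrightarrow> (\<forall>a b. E a b \<longrightarrow> 0 \<le> l a b \<and> l a b = l b a)"

text \<open>d-realizations: maps into R^d (d = CARD('d)).\<close>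
definition realizations ::
  "'d::finite itself \<Rightarrow> ('a \<Rightarrow> 'a \<Rightarrow> bool) \<Rightarrow> ('a \<Rightarrow> 'a \<Rightarrow> real) \<Rightarrow> ('a \<Rightarrow> real^'d) set" where
  "realizations _ E l = {p. \<forall>a b. E a b \<longrightarrow> (norm (p a - p b))\<^sup>2 = l a b}"

text \<open>The Cayley map \<open>\<phi>_F\<close>, with values in R^I, embedded in real^'i (coordinates outside I are 0).\<close>
definition cayley_map ::
  "'i::finite set \<Rightarrow> ('i \<Rightarrow> 'a \<times> 'a) \<Rightarrow> ('a \<Rightarrow> real^'d) \<Rightarrow> real^'i" where
  "cayley_map I F p = (\<chi> i. if i \<in> I then (norm (p (fst (F i)) - p (snd (F i))))\<^sup>2 else 0)"

definition cayley_config ::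
  "'d::finite itself \<Rightarrow> ('a \<Rightarrow> 'a \<Rightarrow> bool) \<Rightarrow> ('a \<Rightarrow> 'a \<Rightarrow> real) \<Rightarrow> 'i::finite set
     \<Rightarrow> ('i \<Rightarrow> 'a \<times> 'a) \<Rightarrow> (real^'i) set" where
  "cayley_config D E l I F = cayley_map I F ` realizations D E l"

definition d_convex ::
  "'d::finite itself \<Rightarrow> ('a \<Rightarrow> 'a \<Rightarrow> bool) \<Rightarrow> 'i::finite set \<Rightarrow> ('i \<Rightarrow> 'a \<times> 'a) \<Rightarrow> bool" where
  "d_convex D E I F \<longleftrightarrow> (\<forall>l. linkage_lengths E l \<longrightarrow> convex (cayley_config D E l I F))"

definition d_cayley_connected ::
  "'d::finite itself \<Rightarrow> ('a \<Rightarrow> 'a \<Rightarrow> bool) \<Rightarrow> 'i::finite set \<Rightarrow> ('i \<Rightarrow> 'a \<times> 'a) \<Rightarrow> bool" where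
  "d_cayley_connected D E I F \<longleftrightarrow>
     (\<forall>l. linkage_lengths E l \<longrightarrow> path_connected (cayley_config D E l I F))"

definition induces_connected :: "('a \<Rightarrow> 'a \<Rightarrow> bool) \<Rightarrow> 'a set \<Rightarrow> bool" where
  "induces_connected E S \<longleftrightarrow>
     (\<forall>a\<in>S. \<forall>b\<in>S. (\<lambda>u v. u \<in> S \<and> v \<in> S \<and> E u v)\<^sup>*\<^sup>* a b)"

definition induced_minor_model ::
  "('a \<Rightarrow> 'a \<Rightarrow> bool) \<Rightarrow> ('b \<Rightarrow> 'b \<Rightarrow> bool) \<Rightarrow> ('b \<Rightarrow> 'a set) \<Rightarrow> bool" where
  "induced_minor_model E M B \<longleftrightarrow>
     (\<forall>x. B x \<noteq> {}) \<and>
     (\<forall>x y. x \<noteq> y \<longrightarrow> B x \<inter> B y = {}) \<and>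
     (\<Union>x. B x) = UNIV \<and>
     (\<forall>x. induces_connected E (B x)) \<and>
     (\<forall>x y. M x y \<longleftrightarrow> (x \<noteq> y \<and> (\<exists>a\<in>B x. \<exists>b\<in>B y. E a b)))"

end

theory Submission
  imports Defs
begin

text \<open>Contract each branch set \<open>B x\<close> to a point: give every edge inside a branch set length 0
and every edge between \<open>B x\<close> and \<open>B y\<close> the length of \<open>xy\<close> in \<open>M\<close>. Since the branch sets are
connected, the realizations of \<open>G\<close> with these lengths are exactly the realizations of \<open>M\<close>
composed with the branch-set map, and the Cayley configuration of \<open>(M, F')\<close> is the image of that
of \<open>(G, F)\<close> under a coordinate selection. Linear images preserve convexity and continuous images
preserve path-connectedness.\<close>

definition branch_of :: "('b \<Rightarrow> 'a set) \<Rightarrow> 'a \<Rightarrow> 'b" where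
  "branch_of B a = (SOME x. a \<in> B x)"

definition contracted_lengths ::
  "('b \<Rightarrow> 'a set) \<Rightarrow> ('b \<Rightarrow> 'b \<Rightarrow> real) \<Rightarrow> 'a \<Rightarrow> 'a \<Rightarrow> real" where
  "contracted_lengths B l a b =
     (if branch_of B a = branch_of B b then 0 else l (branch_of B a) (branch_of B b))"

definition coordinate_selection :: "'j set \<Rightarrow> ('j \<Rightarrow> 'i) \<Rightarrow> real^'i \<Rightarrow> real^'j::finite" where
  "coordinate_selection J g w = (\<chi> j. if j \<in> J then w $ g j else 0)"

lemma linear_coordinate_selection: "linear (coordinate_selection J g)"
  by (rule linearI) (auto simp: coordinate_selection_def vec_eq_iff)

lemma branch_of_mem:
  assumes "(\<Union>x. B x) = UNIV"
  shows "a \<in> B (branch_of B a)"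
proof -
  have "\<exists>x. a \<in> B x" using assms by blast
  then show ?thesis unfolding branch_of_def by (rule someI_ex)
qed

lemma branch_of_eq:
  assumes "(\<Union>x. B x) = UNIV" and "\<forall>x y. x \<noteq> y \<longrightarrow> B x \<inter> B y = {}" and "a \<in> B x"
  shows "branch_of B a = x"
  using branch_of_mem[OF assms(1), of a] assms(2,3) by blast

lemma induced_minor_model_branch_of:
  assumes "induced_minor_model E M B"
  shows "a \<in> B (branch_of B a)" and "a \<in> B x \<Longrightarrow> branch_of B a = x"
  using assms branch_of_mem[of B] branch_of_eq[of B] unfolding induced_minor_model_def by auto

lemma induced_minor_model_edge_between_branches:
  assumes "induced_minor_model E M B" and "E a b" and "branch_of B a \<noteq> branch_of B b"
  shows "M (branch_of B a) (branch_of B b)"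
  using assms induced_minor_model_branch_of(1)[OF assms(1)]
  unfolding induced_minor_model_def by blast

lemma linkage_lengths_contracted:
  assumes "induced_minor_model E M B" and "linkage_lengths M l"
  shows "linkage_lengths E (contracted_lengths B l)"
  unfolding linkage_lengths_def
proof (intro allI impI)
  fix a b assume "E a b"
  then have "branch_of B a \<noteq> branch_of B b \<Longrightarrow> M (branch_of B a) (branch_of B b)"
    using induced_minor_model_edge_between_branches[OF assms(1)] by blast
  then show "0 \<le> contracted_lengths B l a b \<and> contracted_lengths B l a b = contracted_lengths B l b a"
    using assms(2)[unfolded linkage_lengths_def, rule_format, of "branch_of B a" "branch_of B b"]
    unfolding contracted_lengths_def by auto
qed

lemma realization_constant_on_connected:
  assumes "induces_connected E S" and "p \<in> realizations D E l"
    and "\<And>u v. u \<in> S \<Longrightarrow> v \<in> S \<Longrightarrow> E u v \<Longrightarrow> l u v = 0"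
    and "a \<in> S" and "b \<in> S"
  shows "p a = p b"
proof -
  have "(\<lambda>u v. u \<in> S \<and> v \<in> S \<and> E u v)\<^sup>*\<^sup>* a b"
    using assms(1,4,5) unfolding induces_connected_def by blast
  then show ?thesis
  proof (induction rule: rtranclp_induct)
    case (step y z)
    then have "(norm (p y - p z))\<^sup>2 = 0"
      using assms(2,3) unfolding realizations_def by auto
    then show ?case using step.IH by simp
  qed simp
qed

lemma realizations_contracted:
  assumes "induced_minor_model E M B"
  shows "realizations D E (contracted_lengths B l) =
         (\<lambda>q. q \<circ> branch_of B) ` realizations D M l"
proof
  show "(\<lambda>q. q \<circ> branch_of B) ` realizations D M l \<subseteq> realizations D E (contracted_lengths B l)"
    using induced_minor_model_edge_between_branches[OF assms]
    unfolding realizations_def contracted_lengths_def by auto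
next
  note mem = induced_minor_model_branch_of(1)[OF assms]
    and eq = induced_minor_model_branch_of(2)[OF assms]
  show "realizations D E (contracted_lengths B l) \<subseteq> (\<lambda>q. q \<circ> branch_of B) ` realizations D M l"
  proof
    fix p assume p: "p \<in> realizations D E (contracted_lengths B l)"
    define q where "q x = p (SOME a. a \<in> B x)" for x
    have "p a = p b" if "a \<in> B x" "b \<in> B x" for a b x
    proof (rule realization_constant_on_connected[OF _ p _ that])
      show "induces_connected E (B x)" using assms unfolding induced_minor_model_def by blast
    qed (auto simp: contracted_lengths_def eq)
    then have pq: "p = q \<circ> branch_of B"
      unfolding q_def o_def using mem by (metis someI_ex)
    have "q \<in> realizations D M l"
      unfolding realizations_def
    proof (intro CollectI allI impI)
      fix x y assume "M x y"
      then obtain a b where "x \<noteq> y" "a \<in> B x" "b \<in> B y" "E a b"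
        using assms unfolding induced_minor_model_def by blast
      moreover from \<open>E a b\<close> p have "(norm (p a - p b))\<^sup>2 = contracted_lengths B l a b"
        unfolding realizations_def by blast
      ultimately show "(norm (q x - q y))\<^sup>2 = l x y"
        using pq eq by (simp add: contracted_lengths_def)
    qed
    with pq show "p \<in> (\<lambda>q. q \<circ> branch_of B) ` realizations D M l" by blast
  qed
qed

lemma cayley_map_comp:
  assumes "\<forall>j\<in>J. g j \<in> I \<and>
             {\<beta> (fst (F (g j))), \<beta> (snd (F (g j)))} = {fst (F' j), snd (F' j)}"
  shows "coordinate_selection J g (cayley_map I F (q \<circ> \<beta>)) = cayley_map J F' q"
proof -
  have "(norm (q (\<beta> (fst (F (g j)))) - q (\<beta> (snd (F (g j))))))\<^sup>2
        = (norm (q (fst (F' j)) - q (snd (F' j))))\<^sup>2" if "j \<in> J" for j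
    using assms that by (auto simp: doubleton_eq_iff norm_minus_commute)
  then show ?thesis
    using assms unfolding coordinate_selection_def cayley_map_def by (auto simp: vec_eq_iff)
qed

lemma cayley_config_contracted:
  assumes "induced_minor_model E M B"
    and "\<forall>j\<in>J. g j \<in> I \<and>
           {branch_of B (fst (F (g j))), branch_of B (snd (F (g j)))} = {fst (F' j), snd (F' j)}"
  shows "cayley_config D M l J F' =
         coordinate_selection J g ` cayley_config D E (contracted_lengths B l) I F"
  unfolding cayley_config_def realizations_contracted[OF assms(1)] image_image
  by (simp add: cayley_map_comp[OF assms(2)])

lemma induced_minor_model_nonedge_preimages:
  assumes "induced_minor_model E M B"
    and "{{fst (F' j), snd (F' j)} | j. j \<in> J} =
         {{x, y} | x y. \<exists>i\<in>I. fst (F i) \<in> B x \<and> snd (F i) \<in> B y}"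
  obtains g where "\<forall>j\<in>J. g j \<in> I \<and>
           {branch_of B (fst (F (g j))), branch_of B (snd (F (g j)))} = {fst (F' j), snd (F' j)}"
proof -
  have "\<forall>j\<in>J. \<exists>i. i \<in> I \<and>
          {branch_of B (fst (F i)), branch_of B (snd (F i))} = {fst (F' j), snd (F' j)}"
  proof
    fix j assume "j \<in> J"
    then have "{fst (F' j), snd (F' j)} \<in> {{x, y} | x y. \<exists>i\<in>I. fst (F i) \<in> B x \<and> snd (F i) \<in> B y}"
      unfolding assms(2)[symmetric] by blast
    then obtain x y i where "{fst (F' j), snd (F' j)} = {x, y}"
      and "i \<in> I" "fst (F i) \<in> B x" "snd (F i) \<in> B y"
      by blast
    then show "\<exists>i. i \<in> I \<and>
          {branch_of B (fst (F i)), branch_of B (snd (F i))} = {fst (F' j), snd (F' j)}"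
      using induced_minor_model_branch_of(2)[OF assms(1)] by metis
  qed
  from bchoice[OF this] show ?thesis using that by blast
qed

text \<open>Neither simplicity of the graphs, the nonedge conditions on \<open>F\<close> and \<open>F'\<close>, nor the
separation of the branch sets containing the ends of each pair in \<open>F\<close> is needed.\<close>

theorem mainTheorem6:
  fixes E :: "'a::finite \<Rightarrow> 'a \<Rightarrow> bool"
    and M :: "'b::finite \<Rightarrow> 'b \<Rightarrow> bool"
    and B :: "'b \<Rightarrow> 'a set"
    and I :: "'i::finite set" and F :: "'i \<Rightarrow> 'a \<times> 'a"
    and J :: "'j::finite set" and F' :: "'j \<Rightarrow> 'b \<times> 'b"
    and D :: "'d::finite itself"
  assumes "simple_graph E" and "simple_graph M"
    and "indexed_nonedges E I F"
    and "induced_minor_model E M B"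
    and "\<forall>i\<in>I. \<exists>x y. x \<noteq> y \<and> fst (F i) \<in> B x \<and> snd (F i) \<in> B y \<and>
                   \<not> (\<exists>a\<in>B x. \<exists>b\<in>B y. E a b)"
    and "indexed_nonedges M J F'"
    and "{{fst (F' j), snd (F' j)} | j. j \<in> J} =
         {{x, y} | x y. \<exists>i\<in>I. fst (F i) \<in> B x \<and> snd (F i) \<in> B y}"
  shows "(d_convex D E I F \<longrightarrow> d_convex D M J F') \<and>
         (d_cayley_connected D E I F \<longrightarrow> d_cayley_connected D M J F')"
proof -
  obtain g where g: "\<forall>j\<in>J. g j \<in> I \<and>
      {branch_of B (fst (F (g j))), branch_of B (snd (F (g j)))} = {fst (F' j), snd (F' j)}"
    using induced_minor_model_nonedge_preimages[OF assms(4,7)] by blast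
  note config = cayley_config_contracted[OF assms(4) g]
    and lengths = linkage_lengths_contracted[OF assms(4)]
  show ?thesis
  proof (intro conjI impI)
    assume "d_convex D E I F"
    then show "d_convex D M J F'"
      unfolding d_convex_def config
      using lengths convex_linear_image[OF linear_coordinate_selection] by blast
  next
    have "continuous_on S (coordinate_selection J g)" for S
      by (simp add: linear_continuous_on linear_coordinate_selection linear_linear)
    moreover assume "d_cayley_connected D E I F"
    ultimately show "d_cayley_connected D M J F'"
      unfolding d_cayley_connected_def config
      using lengths path_connected_continuous_image by blast
  qed
qed

end
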